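(* Let $(B,\omega)$ be a finite rank, perfectly ordered, well-telescoped Bratteli diagram, with associated bijection $\sigma:\widetilde V\to\overline V$, and let $\mathcal H$ be its associated graph. (1) If $B$ is simple, then $\mathcal H$ is strongly connected. (2) If $B$ belongs to the class $\mathcal A$, then $\mathcal H$ is weakly connected (for any two vertices $t,t'$ there is a directed path from $t$ to $t'$ or from $t'$ to $t$).
   Context: A Bratteli diagram $B$ has levels $V_n$ ($V_0=\{v_0\}$) and edge sets $E_n$ from $V_{n-1}$ to $V_n$ with source/range maps $s,r$; $X_B$ is its path space; standing assumption: $B$ aperiodic. Incidence matrix $F_n=(f^{(n)}_{v,w})_{v\in V_{n+1},w\in V_n}$: number of edges from $w$ to $v$. $B$ is simple if for every $n$ there is $m>n$ with every vertex of $V_n$ connected by a path to every vertex of $V_m$. An ordering $\omega$ is a linear order on each $r^{-1}(v)$; maximal/minimal paths, Vershik map $\varphi_\omega$ and perfectness are as usual (a perfect ordering is one admitting a Vershik map, i.e. a homeomorphism extending the successor map and sending maximal paths onto minimal paths). When $V_n=V$ for all $n\ge1$, $w(v,m,n)$ ($v\in V_n$, $1\le m<n$) is the word of sources (in $V$) of the paths from level $m$ to $v$ listed in increasing lexicographic order. A path is vertical if it passes through the same vertex at every level $\ge1$. A perfectly ordered finite rank diagram $(B,\omega)$ of rank $d$ is well-telescoped if: (i) $|r^{-1}(v)|\ge2$ for all $v\ne v_0$; (ii) $V_n=V$ for all $n\ge1$ with $|V|=d$; (iii) all $\omega$-maximal and $\omega$-minimal paths are vertical; $\widetilde V$ ($\overline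 V$) denotes the set of vertices through which the maximal (minimal) paths pass and $M_{\tilde v}$ ($m_{\bar v}$) the maximal (minimal) path through $\tilde v\in\widetilde V$ ($\bar v\in\overline V$); (iv) for each $w\in V$ there are $\tilde v(w)\in\widetilde V$, $\bar v(w)\in\overline V$ such that for every $n\ge2$ the maximal edge of $r^{-1}(w)$, $w\in V_n$, has source $\tilde v(w)$ and the minimal edge has source $\bar v(w)$; (v) with $\sigma:\widetilde V\to\overline V$ the bijection defined by $\varphi_\omega(M_{\tilde v})=m_{\sigma(\tilde v)}$, whenever a word $\tilde v\bar v$ with $\tilde v\in\widetilde V$, $\bar v\in\overline V$ occurs as a subword of some $w(u,m,n)$ with $n>m\ge1$, then $\bar v=\sigma(\tilde v)$. Associated graph: $W_{\tilde v}=\{w\in V:\tilde v(w)=\tilde v\}$, $W'_{\bar v}=\{w\in V:\bar v(w)=\bar v\}$, $[\bar v,\tilde v]=W'_{\bar v}\cap W_{\tilde v}$. $\mathcal H$ is the directed graph with vertex set $\{[\bar v,\tilde v]:[\bar v,\tilde v]\ne\emptyset\}$ and a directed edge from $[\bar v,\tilde v]$ to $[\bar v_1,\tilde v_1]$ iff $\sigma(\tilde v)=\bar v_1$ (loops allowed). Class $\mathcal A$: diagrams with, for all $n\ge1$, $F_n$ of block lower-triangular form with diagonal blocks $A^{(1)}_n,\dots,A^{(k)}_n,C_n$ and last block row $(B^{(1)}_n,\dots,B^{(k)}_n,C_n)$, all other blocks zero, where each $A^{(i)}_n$ is $d_i\times d_i$ with $d_i$ independent of $n$, $C_n$ has size independent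 of $n$, all $A^{(i)}_n,B^{(i)}_n,C_n$ are strictly positive, and some fixed row in the last block row is strictly positive for every $n$; such a diagram is said to have $k$ minimal components. *)

theory Defs
  imports Main
begin

text \<open>A Bratteli diagram: vertex sets V n (level n), edge sets E n (n \<ge> 1) from level n-1
  to level n, with source and range maps depending on the level.\<close>

record ('v, 'e) bdiag =
  bV    :: "nat \<Rightarrow> 'v set"
  bE    :: "nat \<Rightarrow> 'e set"
  bsrc  :: "nat \<Rightarrow> 'e \<Rightarrow> 'v"
  brng  :: "nat \<Rightarrow> 'e \<Rightarrow> 'v"
  broot :: 'v

definition bratteli :: "('v, 'e) bdiag \<Rightarrow> bool" where
  "bratteli B \<longleftrightarrow>
     bV B 0 = {broot B} \<and>
     (\<forall>n. finite (bV B n) \<and> bV B n \<noteq> {}) \<and>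
     (\<forall>n\<ge>1. finite (bE B n) \<and>
        (\<forall>e\<in>bE B n. bsrc B n e \<in> bV B (n - 1) \<and> brng B n e \<in> bV B n) \<and>
        (\<forall>v\<in>bV B n. \<exists>e\<in>bE B n. brng B n e = v)) \<and>
     (\<forall>n. \<forall>v\<in>bV B n. \<exists>e\<in>bE B (Suc n). bsrc B (Suc n) e = v)"

definition redges :: "('v, 'e) bdiag \<Rightarrow> nat \<Rightarrow> 'v \<Rightarrow> 'e set" where
  "redges B n v = {e \<in> bE B n. brng B n e = v}"

text \<open>Number of edges from w (level n) to v (level n+1): the entry f^(n)_{v,w}.\<close>
definition nedges :: "('v, 'e) bdiag \<Rightarrow> nat \<Rightarrow> 'v \<Rightarrow> 'v \<Rightarrow> nat" where
  "nedges B n w v = card {e \<in> bE B (Suc n). bsrc B (Suc n) e = w \<and> brng B (Suc n) e = v}"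

text \<open>Path space X_B: x i is the edge at level i+1.\<close>
definition paths :: "('v, 'e) bdiag \<Rightarrow> (nat \<Rightarrow> 'e) set" where
  "paths B = {x. \<forall>i. x i \<in> bE B (Suc i) \<and>
                       brng B (Suc i) (x i) = bsrc B (Suc (Suc i)) (x (Suc i))}"

text \<open>Finite path from level m to the vertex u at level n (m < n): p i is the edge
  at level i for m < i \<le> n.\<close>
definition fpath :: "('v, 'e) bdiag \<Rightarrow> nat \<Rightarrow> nat \<Rightarrow> 'v \<Rightarrow> (nat \<Rightarrow> 'e) \<Rightarrow> bool" where
  "fpath B m n u p \<longleftrightarrow> m < n \<and>
     (\<forall>i. m < i \<and> i \<le> n \<longrightarrow> p i \<in> bE B i) \<and>
     (\<forall>i. m < i \<and> i < n \<longrightarrow> brng B i (p i) = bsrc B (Suc i) (p (Suc i))) \<and>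
     brng B n (p n) = u"

definition fsrc :: "('v, 'e) bdiag \<Rightarrow> nat \<Rightarrow> (nat \<Rightarrow> 'e) \<Rightarrow> 'v" where
  "fsrc B m p = bsrc B (Suc m) (p (Suc m))"

definition simple :: "('v, 'e) bdiag \<Rightarrow> bool" where
  "simple B \<longleftrightarrow> (\<forall>n. \<exists>m>n. \<forall>v\<in>bV B n. \<forall>w\<in>bV B m.
      \<exists>p. fpath B n m w p \<and> fsrc B n p = v)"

definition aperiodic :: "('v, 'e) bdiag \<Rightarrow> bool" where
  "aperiodic B \<longleftrightarrow> (\<forall>x\<in>paths B.
      infinite {y\<in>paths B. \<exists>N. \<forall>i\<ge>N. y i = x i})"

definition bordering :: "('v, 'e) bdiag \<Rightarrow> (nat \<Rightarrow> ('e \<times> 'e) set) \<Rightarrow> bool" where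
  "bordering B \<omega> \<longleftrightarrow> (\<forall>n\<ge>1.
      \<omega> n \<subseteq> {(e, e'). e \<in> bE B n \<and> e' \<in> bE B n \<and> brng B n e = brng B n e'} \<and>
      (\<forall>v\<in>bV B n. linear_order_on (redges B n v) (\<omega> n \<inter> (redges B n v \<times> redges B n v))))"

definition maxedge :: "('v, 'e) bdiag \<Rightarrow> (nat \<Rightarrow> ('e \<times> 'e) set) \<Rightarrow> nat \<Rightarrow> 'e \<Rightarrow> bool" where
  "maxedge B \<omega> n e \<longleftrightarrow> e \<in> bE B n \<and>
     (\<forall>e'\<in>bE B n. brng B n e' = brng B n e \<longrightarrow> (e', e) \<in> \<omega> n)"

definition minedge :: "('v, 'e) bdiag \<Rightarrow> (nat \<Rightarrow> ('e \<times> 'e) set) \<Rightarrow> nat \<Rightarrow> 'e \<Rightarrow> bool" where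
  "minedge B \<omega> n e \<longleftrightarrow> e \<in> bE B n \<and>
     (\<forall>e'\<in>bE B n. brng B n e' = brng B n e \<longrightarrow> (e, e') \<in> \<omega> n)"

definition nextedge :: "('v, 'e) bdiag \<Rightarrow> (nat \<Rightarrow> ('e \<times> 'e) set) \<Rightarrow> nat \<Rightarrow> 'e \<Rightarrow> 'e \<Rightarrow> bool" where
  "nextedge B \<omega> n e e' \<longleftrightarrow> e \<in> bE B n \<and> e' \<in> bE B n \<and> brng B n e = brng B n e' \<and>
     (e, e') \<in> \<omega> n \<and> e \<noteq> e' \<and>
     \<not> (\<exists>e''. (e, e'') \<in> \<omega> n \<and> (e'', e') \<in> \<omega> n \<and> e'' \<noteq> e \<and> e'' \<noteq> e')"

definition Xmax :: "('v, 'e) bdiag \<Rightarrow> (nat \<Rightarrow> ('e \<times> 'e) set) \<Rightarrow> (nat \<Rightarrow> 'e) set" where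
  "Xmax B \<omega> = {x \<in> paths B. \<forall>i. maxedge B \<omega> (Suc i) (x i)}"

definition Xmin :: "('v, 'e) bdiag \<Rightarrow> (nat \<Rightarrow> ('e \<times> 'e) set) \<Rightarrow> (nat \<Rightarrow> 'e) set" where
  "Xmin B \<omega> = {x \<in> paths B. \<forall>i. minedge B \<omega> (Suc i) (x i)}"

definition is_succ :: "('v, 'e) bdiag \<Rightarrow> (nat \<Rightarrow> ('e \<times> 'e) set) \<Rightarrow> (nat \<Rightarrow> 'e) \<Rightarrow> (nat \<Rightarrow> 'e) \<Rightarrow> bool" where
  "is_succ B \<omega> x y \<longleftrightarrow> y \<in> paths B \<and> (\<exists>k.
      (\<forall>i<k. maxedge B \<omega> (Suc i) (x i)) \<and>
      nextedge B \<omega> (Suc k) (x k) (y k) \<and>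
      (\<forall>i>k. y i = x i) \<and>
      (\<forall>i<k. minedge B \<omega> (Suc i) (y i)))"

text \<open>Continuity on a subset of the path space w.r.t. the product of discrete topologies.\<close>
definition pcont_on :: "(nat \<Rightarrow> 'e) set \<Rightarrow> ((nat \<Rightarrow> 'e) \<Rightarrow> (nat \<Rightarrow> 'e)) \<Rightarrow> bool" where
  "pcont_on X f \<longleftrightarrow> (\<forall>x\<in>X. \<forall>n. \<exists>m. \<forall>y\<in>X.
      (\<forall>i<m. y i = x i) \<longrightarrow> (\<forall>i<n. f y i = f x i))"

definition phomeo :: "(nat \<Rightarrow> 'e) set \<Rightarrow> ((nat \<Rightarrow> 'e) \<Rightarrow> (nat \<Rightarrow> 'e)) \<Rightarrow> bool" where
  "phomeo X f \<longleftrightarrow> bij_betw f X X \<and> pcont_on X f \<and> pcont_on X (the_inv_into X f)"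

definition vershik_map :: "('v, 'e) bdiag \<Rightarrow> (nat \<Rightarrow> ('e \<times> 'e) set) \<Rightarrow> ((nat \<Rightarrow> 'e) \<Rightarrow> (nat \<Rightarrow> 'e)) \<Rightarrow> bool" where
  "vershik_map B \<omega> \<phi> \<longleftrightarrow> phomeo (paths B) \<phi> \<and>
     (\<forall>x \<in> paths B - Xmax B \<omega>. is_succ B \<omega> x (\<phi> x)) \<and>
     \<phi> ` Xmax B \<omega> = Xmin B \<omega>"

definition perfect :: "('v, 'e) bdiag \<Rightarrow> (nat \<Rightarrow> ('e \<times> 'e) set) \<Rightarrow> bool" where
  "perfect B \<omega> \<longleftrightarrow> (\<exists>\<phi>. vershik_map B \<omega> \<phi>)"

definition vertical_through :: "('v, 'e) bdiag \<Rightarrow> (nat \<Rightarrow> 'e) \<Rightarrow> 'v \<Rightarrow> bool" where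
  "vertical_through B x v \<longleftrightarrow> (\<forall>i. brng B (Suc i) (x i) = v)"

definition Vtil :: "('v, 'e) bdiag \<Rightarrow> (nat \<Rightarrow> ('e \<times> 'e) set) \<Rightarrow> 'v set" where
  "Vtil B \<omega> = {v. \<exists>x\<in>Xmax B \<omega>. vertical_through B x v}"

definition Vbar :: "('v, 'e) bdiag \<Rightarrow> (nat \<Rightarrow> ('e \<times> 'e) set) \<Rightarrow> 'v set" where
  "Vbar B \<omega> = {v. \<exists>x\<in>Xmin B \<omega>. vertical_through B x v}"

definition assoc_sigma :: "('v, 'e) bdiag \<Rightarrow> (nat \<Rightarrow> ('e \<times> 'e) set) \<Rightarrow>
    ((nat \<Rightarrow> 'e) \<Rightarrow> (nat \<Rightarrow> 'e)) \<Rightarrow> ('v \<Rightarrow> 'v) \<Rightarrow> bool" where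
  "assoc_sigma B \<omega> \<phi> \<sigma> \<longleftrightarrow> (\<forall>v\<in>Vtil B \<omega>. \<forall>x\<in>Xmax B \<omega>. vertical_through B x v \<longrightarrow>
      \<phi> x \<in> Xmin B \<omega> \<and> vertical_through B (\<phi> x) (\<sigma> v))"

text \<open>Strict lexicographic order on finite paths from level m to a vertex at level n
  (compare at the highest level where the paths differ).\<close>
definition lexless :: "(nat \<Rightarrow> ('e \<times> 'e) set) \<Rightarrow> nat \<Rightarrow> nat \<Rightarrow> (nat \<Rightarrow> 'e) \<Rightarrow> (nat \<Rightarrow> 'e) \<Rightarrow> bool" where
  "lexless \<omega> m n p q \<longleftrightarrow> (\<exists>k. m < k \<and> k \<le> n \<and> (p k, q k) \<in> \<omega> k \<and> p k \<noteq> q k \<and>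
      (\<forall>i. k < i \<and> i \<le> n \<longrightarrow> p i = q i))"

text \<open>q immediately follows p in the list of paths from level m to u (level n); the word
  w(u,m,n) has the subword (fsrc p)(fsrc q) exactly for such consecutive pairs.\<close>
definition consecutive :: "('v, 'e) bdiag \<Rightarrow> (nat \<Rightarrow> ('e \<times> 'e) set) \<Rightarrow> nat \<Rightarrow> nat \<Rightarrow> 'v \<Rightarrow>
    (nat \<Rightarrow> 'e) \<Rightarrow> (nat \<Rightarrow> 'e) \<Rightarrow> bool" where
  "consecutive B \<omega> m n u p q \<longleftrightarrow> fpath B m n u p \<and> fpath B m n u q \<and> lexless \<omega> m n p q \<and>
      \<not> (\<exists>r. fpath B m n u r \<and> lexless \<omega> m n p r \<and> lexless \<omega> m n r q)"

text \<open>Well-telescoped with common vertex set VV, maps tv = \<tilde>v(.), bv = \<bar>v(.) of (iv)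
  and associated bijection sigma of (v).\<close>
definition well_telescoped :: "('v, 'e) bdiag \<Rightarrow> (nat \<Rightarrow> ('e \<times> 'e) set) \<Rightarrow> 'v set \<Rightarrow>
    ('v \<Rightarrow> 'v) \<Rightarrow> ('v \<Rightarrow> 'v) \<Rightarrow> ('v \<Rightarrow> 'v) \<Rightarrow> bool" where
  "well_telescoped B \<omega> VV tv bv \<sigma> \<longleftrightarrow>
     (\<forall>n\<ge>1. \<forall>v\<in>bV B n. card (redges B n v) \<ge> 2) \<and>
     (\<forall>n\<ge>1. bV B n = VV) \<and>
     (\<forall>x\<in>Xmax B \<omega>. \<exists>v. vertical_through B x v) \<and>
     (\<forall>x\<in>Xmin B \<omega>. \<exists>v. vertical_through B x v) \<and>
     (\<forall>w\<in>VV. tv w \<in> Vtil B \<omega> \<and> bv w \<in> Vbar B \<omega> \<and>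
        (\<forall>n\<ge>2. \<forall>e\<in>redges B n w.
           (maxedge B \<omega> n e \<longrightarrow> bsrc B n e = tv w) \<and>
           (minedge B \<omega> n e \<longrightarrow> bsrc B n e = bv w))) \<and>
     (\<forall>m n u p q. 1 \<le> m \<and> m < n \<and> u \<in> VV \<and> consecutive B \<omega> m n u p q \<and>
        fsrc B m p \<in> Vtil B \<omega> \<and> fsrc B m q \<in> Vbar B \<omega> \<longrightarrow>
        fsrc B m q = \<sigma> (fsrc B m p))"

definition Hverts :: "'v set \<Rightarrow> 'v set \<Rightarrow> 'v set \<Rightarrow> ('v \<Rightarrow> 'v) \<Rightarrow> ('v \<Rightarrow> 'v) \<Rightarrow> ('v \<times> 'v) set" where
  "Hverts VV Vt Vb tv bv =
     {(b, t). b \<in> Vb \<and> t \<in> Vt \<and> {w \<in> VV. bv w = b \<and> tv w = t} \<noteq> {}}"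

definition Hedges :: "('v \<times> 'v) set \<Rightarrow> ('v \<Rightarrow> 'v) \<Rightarrow> (('v \<times> 'v) \<times> ('v \<times> 'v)) set" where
  "Hedges H \<sigma> = {((b, t), (b1, t1)). (b, t) \<in> H \<and> (b1, t1) \<in> H \<and> \<sigma> t = b1}"

definition strongly_connected :: "'a set \<Rightarrow> ('a \<times> 'a) set \<Rightarrow> bool" where
  "strongly_connected N R \<longleftrightarrow> (\<forall>t\<in>N. \<forall>t'\<in>N. (t, t') \<in> R\<^sup>*)"

definition weakly_connected :: "'a set \<Rightarrow> ('a \<times> 'a) set \<Rightarrow> bool" where
  "weakly_connected N R \<longleftrightarrow> (\<forall>t\<in>N. \<forall>t'\<in>N. (t, t') \<in> R\<^sup>* \<or> (t', t) \<in> R\<^sup>*)"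

text \<open>lab n v \<in> {1..k+1} is the block of vertex v at level n (block k+1 = the C block).
  F_n (rows V_{n+1}, columns V_n) is block lower triangular with strictly positive
  diagonal blocks A^(i)_n, C_n, strictly positive last block row, zeros elsewhere.\<close>
definition classA :: "('v, 'e) bdiag \<Rightarrow> bool" where
  "classA B \<longleftrightarrow> (\<exists>k c d lab. 1 \<le> k \<and> 1 \<le> c \<and> (\<forall>i\<in>{1..k}. 1 \<le> (d i :: nat)) \<and>
     (\<forall>n\<ge>1.
        (\<forall>v\<in>bV B n. lab n v \<in> {1..Suc k}) \<and>
        (\<forall>i\<in>{1..k}. card {v\<in>bV B n. lab n v = i} = d i) \<and>
        card {v\<in>bV B n. lab n v = Suc k} = c \<and>
        (\<forall>w\<in>bV B n. \<forall>v\<in>bV B (Suc n).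
           (lab (Suc n) v = Suc k \<longrightarrow> nedges B n w v > 0) \<and>
           (lab (Suc n) v \<noteq> Suc k \<longrightarrow> (nedges B n w v > 0 \<longleftrightarrow> lab n w = lab (Suc n) v)))))"

end

theory Submission
  imports Defs
begin

(* For w in VV write block w = (bv w, tv w).  The vertices of the associated
   graph H are exactly the blocks of the vertices of VV, and H has an edge
   block x -> block y iff sigma (tv x) = bv y.
   (a) If e' immediately follows e among the edges into u at a level n >= 3, prolonging e
       by a maximal and e' by a minimal edge one level down gives consecutive paths from
       level n - 2 to u with sources tv (s e) and bv (s e'); condition (v) gives
       sigma (tv (s e)) = bv (s e'), i.e. an edge block (s e) -> block (s e').
   (b) Chaining (a) through the linear order on r^{-1}(u), and using that the maximal and
       minimal edges into u have sources tv u and bv u, every source w of an edge into u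
       satisfies block w ->* block (tv u) and block (bv u) ->* block w; by induction the
       same holds for the source of any finite path ending at u.
   (c) If B is simple, all blocks reach block (tv (s e)) and are reached from
       block (bv (s e')) for consecutive edges e, e' far up; (a) joins the two.
   (d) If B is in class A, a vertex of the last block at level 3 receives edges from all
       vertices, and the comparability of these edges gives weak connectivity via (b). *)

lemma linear_order_onD:
  assumes "linear_order_on S r"
  shows "r \<subseteq> S \<times> S" "\<And>x. x \<in> S \<Longrightarrow> (x, x) \<in> r"
    "\<And>x y z. (x, y) \<in> r \<Longrightarrow> (y, z) \<in> r \<Longrightarrow> (x, z) \<in> r"
    "\<And>x y. (x, y) \<in> r \<Longrightarrow> (y, x) \<in> r \<Longrightarrow> x = y"
    "\<And>x y. x \<in> S \<Longrightarrow> y \<in> S \<Longrightarrow> x \<noteq> y \<Longrightarrow> (x, y) \<in> r \<or> (y, x) \<in> r"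
  using assms unfolding linear_order_on_def partial_order_on_def preorder_on_def
    refl_on_def total_on_def antisym_on_def trans_on_def by blast+

definition covers :: "('a \<times> 'a) set \<Rightarrow> 'a \<Rightarrow> 'a \<Rightarrow> bool" where
  "covers r x y \<longleftrightarrow> (x, y) \<in> r \<and> x \<noteq> y \<and> \<not> (\<exists>z. (x, z) \<in> r \<and> (z, y) \<in> r \<and> z \<noteq> x \<and> z \<noteq> y)"

lemma linear_order_least:
  assumes lo: "linear_order_on S r" and "finite A" "A \<noteq> {}" "A \<subseteq> S"
  shows "\<exists>x\<in>A. \<forall>y\<in>A. (x, y) \<in> r"
  using assms(2-4)
proof (induction A rule: finite_ne_induct)
  case (singleton x)
  then show ?case using linear_order_onD(2)[OF lo] by auto
next
  case (insert a F)
  then obtain x where x: "x \<in> F" "\<forall>y\<in>F. (x, y) \<in> r" by auto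
  have "a \<in> S" "x \<in> S" using insert x by auto
  then consider "(a, x) \<in> r" | "(x, a) \<in> r"
    using linear_order_onD(2,5)[OF lo] by blast
  then show ?case
    using x linear_order_onD(2,3)[OF lo] \<open>a \<in> S\<close> by cases blast+
qed

lemma linear_order_greatest:
  assumes "linear_order_on S r" and "finite A" "A \<noteq> {}" "A \<subseteq> S"
  shows "\<exists>x\<in>A. \<forall>y\<in>A. (y, x) \<in> r"
  using linear_order_least[of S "r\<inverse>" A] assms by simp

lemma linear_order_cover_exists:
  assumes lo: "linear_order_on S r" and fin: "finite S" and ab: "(a, b) \<in> r" "a \<noteq> b"
  shows "\<exists>c. covers r a c \<and> (c, b) \<in> r"
proof -
  note F = linear_order_onD[OF lo]
  define I where "I = {z \<in> S. (a, z) \<in> r \<and> z \<noteq> a \<and> (z, b) \<in> r}"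
  have "b \<in> I" using ab F(1,2) unfolding I_def by blast
  moreover have "finite I" "I \<subseteq> S" using fin unfolding I_def by auto
  ultimately obtain c where c: "c \<in> I" "\<forall>y\<in>I. (c, y) \<in> r"
    using linear_order_least[OF lo] by blast
  have "\<not> (\<exists>z. (a, z) \<in> r \<and> (z, c) \<in> r \<and> z \<noteq> a \<and> z \<noteq> c)"
  proof
    assume "\<exists>z. (a, z) \<in> r \<and> (z, c) \<in> r \<and> z \<noteq> a \<and> z \<noteq> c"
    then obtain z where z: "(a, z) \<in> r" "(z, c) \<in> r" "z \<noteq> a" "z \<noteq> c" by blast
    then have "z \<in> I" using c F(1,3) unfolding I_def by blast
    then show False using c z F(4) by blast
  qed
  then show ?thesis using c unfolding I_def covers_def by blast
qed

text \<open>If g maps covering pairs to R-paths, it maps all ordered pairs to R-paths: a finite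
  interval [a, b] is walked through by successive covers.\<close>
lemma linear_order_chain:
  assumes lo: "linear_order_on S r" and fin: "finite S"
    and step: "\<And>x y. covers r x y \<Longrightarrow> (g x, g y) \<in> R\<^sup>*"
  shows "(a, b) \<in> r \<Longrightarrow> (g a, g b) \<in> R\<^sup>*"
proof (induction "card {z. (a, z) \<in> r \<and> (z, b) \<in> r}" arbitrary: a rule: less_induct)
  case less
  note F = linear_order_onD[OF lo]
  show ?case
  proof (cases "a = b")
    case False
    then obtain c where c: "covers r a c" "(c, b) \<in> r"
      using linear_order_cover_exists[OF lo fin less.prems] by blast
    let ?between = "\<lambda>x. {z. (x, z) \<in> r \<and> (z, b) \<in> r}"
    have "finite (?between a)" using F(1) by (blast intro: finite_subset[OF _ fin])
    moreover have "?between c \<subset> ?between a"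
    proof
      show "?between c \<subseteq> ?between a" using c F(3) unfolding covers_def by blast
      have "a \<in> ?between a" "a \<notin> ?between c"
        using less.prems c F(1,2,4) unfolding covers_def by blast+
      then show "?between c \<noteq> ?between a" by blast
    qed
    ultimately have "card (?between c) < card (?between a)" by (rule psubset_card_mono)
    then have "(g c, g b) \<in> R\<^sup>*" using less.hyps c(2) by blast
    then show ?thesis using step[OF c(1)] by simp
  qed simp
qed

lemma two_step_fpath:
  assumes "e \<in> bE B (Suc (Suc m))" "brng B (Suc (Suc m)) e = u"
    and "a \<in> bE B (Suc m)" "brng B (Suc m) a = bsrc B (Suc (Suc m)) e"
  shows "fpath B m (Suc (Suc m)) u (\<lambda>i. if i = Suc (Suc m) then e else a)"
    and "fsrc B m (\<lambda>i. if i = Suc (Suc m) then e else a) = bsrc B (Suc m) a"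
proof -
  have levels: "i = Suc m \<or> i = Suc (Suc m)" if "m < i" "i \<le> Suc (Suc m)" for i
    using that by auto
  show "fpath B m (Suc (Suc m)) u (\<lambda>i. if i = Suc (Suc m) then e else a)"
    unfolding fpath_def
  proof (intro conjI allI impI)
    fix i assume "m < i \<and> i < Suc (Suc m)"
    then have "i = Suc m" by auto
    then show "brng B i (if i = Suc (Suc m) then e else a) =
        bsrc B (Suc i) (if Suc i = Suc (Suc m) then e else a)" using assms(4) by simp
  qed (use assms levels in auto)
  show "fsrc B m (\<lambda>i. if i = Suc (Suc m) then e else a) = bsrc B (Suc m) a"
    unfolding fsrc_def by simp
qed

text \<open>For two-step paths whose lower edge is maximal, a lexicographically larger path must
  already be larger in its top edge (a larger lower edge into the same vertex does not exist).\<close>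
lemma lexless_two_step_above_max:
  assumes anti: "antisym (\<omega> (Suc m))"
    and p: "fpath B m (Suc (Suc m)) u p" and r: "fpath B m (Suc (Suc m)) u r"
    and less: "lexless \<omega> m (Suc (Suc m)) p r"
    and top: "maxedge B \<omega> (Suc m) (p (Suc m))"
  shows "(p (Suc (Suc m)), r (Suc (Suc m))) \<in> \<omega> (Suc (Suc m)) \<and> p (Suc (Suc m)) \<noteq> r (Suc (Suc m))"
proof -
  obtain k where k: "m < k" "k \<le> Suc (Suc m)" "(p k, r k) \<in> \<omega> k" "p k \<noteq> r k"
    and above: "\<forall>i. k < i \<and> i \<le> Suc (Suc m) \<longrightarrow> p i = r i"
    using less unfolding lexless_def by blast
  have "k \<noteq> Suc m"
  proof
    assume km: "k = Suc m"
    then have "p (Suc (Suc m)) = r (Suc (Suc m))" using above by simp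
    then have "brng B (Suc m) (r (Suc m)) = brng B (Suc m) (p (Suc m))"
      using p r unfolding fpath_def by (metis Suc_n_not_le_n lessI not_less_eq_eq)
    moreover have "r (Suc m) \<in> bE B (Suc m)" using r unfolding fpath_def by auto
    ultimately have "(r (Suc m), p (Suc m)) \<in> \<omega> (Suc m)" using top unfolding maxedge_def by blast
    then show False using k(3,4) km anti unfolding antisym_def by blast
  qed
  then have "k = Suc (Suc m)" using k(1,2) by linarith
  then show ?thesis using k by simp
qed

text \<open>Dually for a minimal lower edge; obtained from the previous lemma for the reversed order.\<close>
lemma lexless_two_step_below_min:
  assumes anti: "antisym (\<omega> (Suc m))"
    and q: "fpath B m (Suc (Suc m)) u q" and r: "fpath B m (Suc (Suc m)) u r"
    and less: "lexless \<omega> m (Suc (Suc m)) r q"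
    and bottom: "minedge B \<omega> (Suc m) (q (Suc m))"
  shows "(r (Suc (Suc m)), q (Suc (Suc m))) \<in> \<omega> (Suc (Suc m)) \<and> r (Suc (Suc m)) \<noteq> q (Suc (Suc m))"
proof -
  let ?\<omega>' = "\<lambda>n. (\<omega> n)\<inverse>"
  have "lexless ?\<omega>' m (Suc (Suc m)) q r"
    using less unfolding lexless_def by (metis converse_iff)
  moreover have "maxedge B ?\<omega>' (Suc m) (q (Suc m))"
    using bottom unfolding maxedge_def minedge_def by simp
  moreover have "antisym (?\<omega>' (Suc m))" using anti by simp
  ultimately show ?thesis using lexless_two_step_above_max[of ?\<omega>' m B u q r] q r by auto
qed

locale well_telescoped_diagram =
  fixes B :: "('v, 'e) bdiag" and \<omega> :: "nat \<Rightarrow> ('e \<times> 'e) set"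
    and VV :: "'v set" and tv bv \<sigma> :: "'v \<Rightarrow> 'v"
  assumes bratteli: "bratteli B" and ordering: "bordering B \<omega>"
    and telescoped: "well_telescoped B \<omega> VV tv bv \<sigma>"
begin

lemma level_vertices: "1 \<le> n \<Longrightarrow> bV B n = VV"
  using telescoped unfolding well_telescoped_def by blast

lemma edge_levels:
  assumes "1 \<le> n"
  shows "finite (bE B n)" "\<And>e. e \<in> bE B n \<Longrightarrow> bsrc B n e \<in> bV B (n - 1) \<and> brng B n e \<in> bV B n"
    "\<And>v. v \<in> bV B n \<Longrightarrow> redges B n v \<noteq> {}"
  using bratteli assms unfolding bratteli_def redges_def by blast+

lemma range_in_VV: "1 \<le> n \<Longrightarrow> e \<in> bE B n \<Longrightarrow> brng B n e \<in> VV"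
  using edge_levels(2) level_vertices by blast

lemma source_in_VV: "2 \<le> n \<Longrightarrow> e \<in> bE B n \<Longrightarrow> bsrc B n e \<in> VV"
  using edge_levels(2)[of n e] level_vertices[of "n - 1"] by simp

lemma redges_finite: "1 \<le> n \<Longrightarrow> finite (redges B n u)"
  using edge_levels(1) unfolding redges_def by simp

lemma redges_nonempty: "1 \<le> n \<Longrightarrow> u \<in> VV \<Longrightarrow> redges B n u \<noteq> {}"
  using edge_levels(3) level_vertices by blast

lemma redges_card: "1 \<le> n \<Longrightarrow> u \<in> VV \<Longrightarrow> 2 \<le> card (redges B n u)"
  using telescoped level_vertices unfolding well_telescoped_def by blast

lemma redges_linear_order:
  "1 \<le> n \<Longrightarrow> u \<in> VV \<Longrightarrow>
   linear_order_on (redges B n u) (\<omega> n \<inter> (redges B n u \<times> redges B n u))"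
  using ordering level_vertices unfolding bordering_def by blast

lemma ordered_same_range:
  "1 \<le> n \<Longrightarrow> (a, b) \<in> \<omega> n \<Longrightarrow> a \<in> bE B n \<and> b \<in> bE B n \<and> brng B n a = brng B n b"
  using ordering unfolding bordering_def by blast

text \<open>Each \<omega> n relates only edges with a common range, on which it is antisymmetric.\<close>
lemma ordering_antisym: assumes "1 \<le> n" shows "antisym (\<omega> n)"
proof (rule antisymI)
  fix a b assume ab: "(a, b) \<in> \<omega> n" "(b, a) \<in> \<omega> n"
  let ?u = "brng B n a"
  have "a \<in> redges B n ?u" "b \<in> redges B n ?u" "?u \<in> VV"
    using ordered_same_range[OF assms ab(1)] range_in_VV[OF assms] unfolding redges_def by auto
  then show "a = b"
    using linear_order_onD(4)[OF redges_linear_order[OF assms]] ab by blast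
qed

lemma maxedge_exists: assumes "1 \<le> n" "u \<in> VV" shows "\<exists>e\<in>redges B n u. maxedge B \<omega> n e"
  using linear_order_greatest[OF redges_linear_order[OF assms] redges_finite[OF assms(1)]
      redges_nonempty[OF assms]]
  unfolding maxedge_def redges_def by auto

lemma minedge_exists: assumes "1 \<le> n" "u \<in> VV" shows "\<exists>e\<in>redges B n u. minedge B \<omega> n e"
  using linear_order_least[OF redges_linear_order[OF assms] redges_finite[OF assms(1)]
      redges_nonempty[OF assms]]
  unfolding minedge_def redges_def by auto

lemma source_of_maxedge:
  "2 \<le> n \<Longrightarrow> u \<in> VV \<Longrightarrow> e \<in> redges B n u \<Longrightarrow> maxedge B \<omega> n e \<Longrightarrow> bsrc B n e = tv u"
  using telescoped unfolding well_telescoped_def by blast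

lemma source_of_minedge:
  "2 \<le> n \<Longrightarrow> u \<in> VV \<Longrightarrow> e \<in> redges B n u \<Longrightarrow> minedge B \<omega> n e \<Longrightarrow> bsrc B n e = bv u"
  using telescoped unfolding well_telescoped_def by blast

lemma tv_in_Vtil: "u \<in> VV \<Longrightarrow> tv u \<in> Vtil B \<omega>"
  using telescoped unfolding well_telescoped_def by blast

lemma bv_in_Vbar: "u \<in> VV \<Longrightarrow> bv u \<in> Vbar B \<omega>"
  using telescoped unfolding well_telescoped_def by blast

lemma sigma_on_consecutive:
  "1 \<le> m \<Longrightarrow> m < n \<Longrightarrow> u \<in> VV \<Longrightarrow> consecutive B \<omega> m n u p q \<Longrightarrow>
   fsrc B m p \<in> Vtil B \<omega> \<Longrightarrow> fsrc B m q \<in> Vbar B \<omega> \<Longrightarrow> fsrc B m q = \<sigma> (fsrc B m p)"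
  using telescoped unfolding well_telescoped_def by blast

lemma vertical_path_loop:
  assumes "x \<in> paths B" "vertical_through B x t"
  shows "t \<in> VV" "x 1 \<in> redges B 2 t" "bsrc B 2 (x 1) = t"
proof -
  have "\<forall>i. x i \<in> bE B (Suc i) \<and> brng B (Suc i) (x i) = bsrc B (Suc (Suc i)) (x (Suc i))"
    using assms(1) unfolding paths_def by simp
  from this[rule_format, of 0] this[rule_format, of 1]
  have "x 0 \<in> bE B 1" "x 1 \<in> bE B 2" "brng B 1 (x 0) = bsrc B 2 (x 1)"
    by (simp_all add: numeral_2_eq_2)
  moreover have "brng B 1 (x 0) = t" "brng B 2 (x 1) = t"
    using assms(2) unfolding vertical_through_def by (simp_all add: numeral_2_eq_2)
  ultimately show "t \<in> VV" "x 1 \<in> redges B 2 t" "bsrc B 2 (x 1) = t"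
    using range_in_VV[of 1] unfolding redges_def by auto
qed

lemma Vtil_fixed: assumes "t \<in> Vtil B \<omega>" shows "t \<in> VV" "tv t = t"
proof -
  obtain x where x: "x \<in> Xmax B \<omega>" "vertical_through B x t" using assms unfolding Vtil_def by blast
  then have "x \<in> paths B" "maxedge B \<omega> 2 (x 1)" unfolding Xmax_def by (auto simp: numeral_2_eq_2)
  then show "t \<in> VV" "tv t = t"
    using vertical_path_loop[of x t] source_of_maxedge[of 2 t "x 1"] x(2) by auto
qed

lemma Vbar_fixed: assumes "t \<in> Vbar B \<omega>" shows "t \<in> VV" "bv t = t"
proof -
  obtain x where x: "x \<in> Xmin B \<omega>" "vertical_through B x t" using assms unfolding Vbar_def by blast
  then have "x \<in> paths B" "minedge B \<omega> 2 (x 1)" unfolding Xmin_def by (auto simp: numeral_2_eq_2)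
  then show "t \<in> VV" "bv t = t"
    using vertical_path_loop[of x t] source_of_minedge[of 2 t "x 1"] x(2) by auto
qed

definition block :: "'v \<Rightarrow> 'v \<times> 'v" where
  "block w = (bv w, tv w)"

definition HV :: "('v \<times> 'v) set" where
  "HV = Hverts VV (Vtil B \<omega>) (Vbar B \<omega>) tv bv"

definition HE :: "(('v \<times> 'v) \<times> ('v \<times> 'v)) set" where
  "HE = Hedges HV \<sigma>"

lemma HV_eq: "HV = block ` VV"
  unfolding HV_def Hverts_def block_def using tv_in_Vtil bv_in_Vbar by fastforce

lemma HE_block_edge: "x \<in> VV \<Longrightarrow> y \<in> VV \<Longrightarrow> \<sigma> (tv x) = bv y \<Longrightarrow> (block x, block y) \<in> HE"
  unfolding HE_def Hedges_def HV_eq block_def by auto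

lemma HE_edgeD: "(z, z') \<in> HE \<Longrightarrow> \<exists>x\<in>VV. \<exists>y\<in>VV. z = block x \<and> z' = block y \<and> \<sigma> (tv x) = bv y"
  unfolding HE_def Hedges_def HV_eq block_def by auto

text \<open>Out-edges of block x depend only on tv x, and tv (tv x) = tv x; hence block (tv x)
  reaches whatever block x reaches (the trivial path being covered by t = tv t).
  Dually, block (bv y) is reached from whatever reaches block y.\<close>
lemma reach_from_top:
  assumes reach: "(block x, block t) \<in> HE\<^sup>*" and t: "t \<in> Vtil B \<omega>" and x: "x \<in> VV"
  shows "(block (tv x), block t) \<in> HE\<^sup>*"
  using reach
proof (cases rule: converse_rtranclE)
  case base
  then show ?thesis using Vtil_fixed[OF t] by (simp add: block_def)
next
  case (step z)
  have tx: "tv x \<in> VV" "tv (tv x) = tv x" using Vtil_fixed[OF tv_in_Vtil[OF x]] by auto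
  obtain y where "y \<in> VV" "z = block y" "\<sigma> (tv x) = bv y"
    using HE_edgeD[OF step(1)] by (auto simp: block_def)
  then have "(block (tv x), z) \<in> HE" using HE_block_edge[OF tx(1)] tx(2) by simp
  then show ?thesis using step(2) by simp
qed

lemma reach_to_bottom:
  assumes reach: "(block b, block y) \<in> HE\<^sup>*" and b: "b \<in> Vbar B \<omega>" and y: "y \<in> VV"
  shows "(block b, block (bv y)) \<in> HE\<^sup>*"
  using reach
proof (cases rule: rtranclE)
  case base
  then show ?thesis using Vbar_fixed[OF b] by (simp add: block_def)
next
  case (step z)
  have by': "bv y \<in> VV" "bv (bv y) = bv y" using Vbar_fixed[OF bv_in_Vbar[OF y]] by auto
  obtain x where "x \<in> VV" "z = block x" "\<sigma> (tv x) = bv y"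
    using HE_edgeD[OF step(2)] by (auto simp: block_def)
  then have "(z, block (bv y)) \<in> HE" using HE_block_edge[OF _ by'(1)] by'(2) by simp
  then show ?thesis using step(1) by simp
qed

lemma nextedge_if_covers:
  assumes n: "1 \<le> n"
    and cov: "covers (\<omega> n \<inter> (redges B n u \<times> redges B n u)) e e'"
  shows "nextedge B \<omega> n e e'"
proof -
  let ?S = "redges B n u"
  have e: "e \<in> ?S" "e' \<in> ?S" and ord: "(e, e') \<in> \<omega> n" "e \<noteq> e'"
    and none: "\<not> (\<exists>z. (e, z) \<in> \<omega> n \<inter> ?S \<times> ?S \<and> (z, e') \<in> \<omega> n \<inter> ?S \<times> ?S \<and> z \<noteq> e \<and> z \<noteq> e')"
    using cov unfolding covers_def by auto
  have in_S: "z \<in> ?S" if "(e, z) \<in> \<omega> n" for z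
    using ordered_same_range[OF n that] e(1) unfolding redges_def by auto
  show ?thesis
    unfolding nextedge_def
  proof (intro conjI)
    show "e \<in> bE B n" "e' \<in> bE B n" "brng B n e = brng B n e'"
      using e unfolding redges_def by auto
    show "(e, e') \<in> \<omega> n" "e \<noteq> e'" by fact+
    show "\<not> (\<exists>z. (e, z) \<in> \<omega> n \<and> (z, e') \<in> \<omega> n \<and> z \<noteq> e \<and> z \<noteq> e')"
      using none in_S e by blast
  qed
qed

text \<open>Since every vertex receives at least two edges, each r^{-1}(u) contains a pair of
  consecutive edges.\<close>
lemma nextedge_exists:
  assumes n: "1 \<le> n" and u: "u \<in> VV"
  shows "\<exists>e e'. nextedge B \<omega> n e e' \<and> brng B n e = u"
proof -
  let ?S = "redges B n u" and ?r = "\<omega> n \<inter> (redges B n u \<times> redges B n u)"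
  note lo = redges_linear_order[OF n u]
  obtain a where a: "a \<in> ?S" using redges_nonempty[OF n u] by blast
  have "\<not> ?S \<subseteq> {a}"
  proof
    assume "?S \<subseteq> {a}"
    then have "card ?S \<le> 1" using card_mono[of "{a}" ?S] by simp
    then show False using redges_card[OF n u] by simp
  qed
  then obtain b where ab: "a \<in> ?S" "b \<in> ?S" "a \<noteq> b" using a by blast
  then have "(a, b) \<in> ?r \<or> (b, a) \<in> ?r" using linear_order_onD(5)[OF lo] by blast
  then obtain c d where "(c, d) \<in> ?r" "c \<noteq> d" using ab(3) by blast
  then obtain e where "covers ?r c e"
    using linear_order_cover_exists[OF lo redges_finite[OF n]] by blast
  moreover from this have "brng B n c = u" unfolding covers_def redges_def by auto
  ultimately show ?thesis using nextedge_if_covers[OF n] by blast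
qed

text \<open>Key step: if e' immediately follows e in r^{-1}(u) at a level n \<ge> 3, then prolonging e
  by the maximal edge and e' by the minimal edge one level below gives consecutive paths
  from level n - 2 to u, with sources tv (s e) and bv (s e'); condition (v) of
  well-telescopedness then yields \<sigma> (tv (s e)) = bv (s e').\<close>
lemma sigma_across_nextedge:
  assumes m: "1 \<le> m" and u: "u \<in> VV"
    and next_e: "nextedge B \<omega> (Suc (Suc m)) e e'" and eu: "brng B (Suc (Suc m)) e = u"
  shows "\<sigma> (tv (bsrc B (Suc (Suc m)) e)) = bv (bsrc B (Suc (Suc m)) e')"
proof -
  let ?n = "Suc (Suc m)"
  define v where "v = bsrc B ?n e"
  define v' where "v' = bsrc B ?n e'"
  have e: "e \<in> bE B ?n" "e' \<in> bE B ?n" "brng B ?n e' = u" "(e, e') \<in> \<omega> ?n" "e \<noteq> e'"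
    and nothing_between: "\<not> (\<exists>z. (e, z) \<in> \<omega> ?n \<and> (z, e') \<in> \<omega> ?n \<and> z \<noteq> e \<and> z \<noteq> e')"
    using next_e eu unfolding nextedge_def by auto
  have v: "v \<in> VV" "v' \<in> VV" using source_in_VV e(1,2) unfolding v_def v'_def by auto
  have m1: "1 \<le> Suc m" and m2: "2 \<le> Suc m" using m by auto
  obtain a where a: "a \<in> redges B (Suc m) v" "maxedge B \<omega> (Suc m) a"
    using maxedge_exists[OF m1 v(1)] by blast
  obtain a' where a': "a' \<in> redges B (Suc m) v'" "minedge B \<omega> (Suc m) a'"
    using minedge_exists[OF m1 v(2)] by blast
  define p where "p = (\<lambda>i. if i = ?n then e else a)"
  define q where "q = (\<lambda>i. if i = ?n then e' else a')"
  have p: "fpath B m ?n u p" "fsrc B m p = tv v"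
    using two_step_fpath[of e B m u a] e eu a source_of_maxedge[OF m2 v(1) a]
    unfolding p_def v_def redges_def by auto
  have q: "fpath B m ?n u q" "fsrc B m q = bv v'"
    using two_step_fpath[of e' B m u a'] e a' source_of_minedge[OF m2 v(2) a']
    unfolding q_def v'_def redges_def by auto
  have "lexless \<omega> m ?n p q" unfolding lexless_def p_def q_def using e(4,5) by auto
  moreover have "\<not> (\<exists>r. fpath B m ?n u r \<and> lexless \<omega> m ?n p r \<and> lexless \<omega> m ?n r q)"
  proof
    assume "\<exists>r. fpath B m ?n u r \<and> lexless \<omega> m ?n p r \<and> lexless \<omega> m ?n r q"
    then obtain r where r: "fpath B m ?n u r" "lexless \<omega> m ?n p r" "lexless \<omega> m ?n r q" by blast
    have "(e, r ?n) \<in> \<omega> ?n" "e \<noteq> r ?n"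
      using lexless_two_step_above_max[OF ordering_antisym[OF m1] p(1) r(1,2)] a(2)
      unfolding p_def by auto
    moreover have "(r ?n, e') \<in> \<omega> ?n" "r ?n \<noteq> e'"
      using lexless_two_step_below_min[OF ordering_antisym[OF m1] q(1) r(1,3)] a'(2)
      unfolding q_def by auto
    ultimately show False using nothing_between by blast
  qed
  ultimately have "consecutive B \<omega> m ?n u p q" unfolding consecutive_def using p(1) q(1) by blast
  then have "fsrc B m q = \<sigma> (fsrc B m p)"
    using sigma_on_consecutive[OF m _ u, of ?n p q] p(2) q(2) tv_in_Vtil[OF v(1)] bv_in_Vbar[OF v(2)]
    by simp
  then show ?thesis using p(2) q(2) unfolding v_def v'_def by simp
qed

text \<open>Chaining the previous lemma along r^{-1}(u): the block of the source of an edge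
  reaches the block of the source of every larger edge into the same vertex.\<close>
lemma ordered_sources_reach:
  assumes n: "3 \<le> n" and u: "u \<in> VV" and e: "e \<in> redges B n u" "e' \<in> redges B n u"
    and ord: "(e, e') \<in> \<omega> n"
  shows "(block (bsrc B n e), block (bsrc B n e')) \<in> HE\<^sup>*"
proof -
  define m where "m = n - 2"
  have nm: "n = Suc (Suc m)" and m: "1 \<le> m" using n unfolding m_def by auto
  let ?r = "\<omega> n \<inter> (redges B n u \<times> redges B n u)"
  have n1: "1 \<le> n" using n by simp
  show ?thesis
  proof (rule linear_order_chain[OF redges_linear_order[OF n1 u] redges_finite[OF n1]])
    show "(e, e') \<in> ?r" using e ord by blast
  next
    fix x y assume cov: "covers ?r x y"
    then have "x \<in> redges B n u" "y \<in> redges B n u" unfolding covers_def by auto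
    then have xy: "brng B n x = u" "bsrc B n x \<in> VV" "bsrc B n y \<in> VV"
      using source_in_VV n unfolding redges_def by auto
    have "\<sigma> (tv (bsrc B n x)) = bv (bsrc B n y)"
      using sigma_across_nextedge[OF m u, of x y] nextedge_if_covers[OF n1 cov] xy(1)
      unfolding nm by blast
    then show "(block (bsrc B n x), block (bsrc B n y)) \<in> HE\<^sup>*"
      using HE_block_edge[OF xy(2,3)] by blast
  qed
qed

text \<open>The maximal (minimal) edge into u has source tv u (bv u); hence the source of any
  edge into u reaches block (tv u) and is reached from block (bv u).\<close>
lemma source_reaches:
  assumes n: "3 \<le> n" and u: "u \<in> VV" and e: "e \<in> redges B n u"
  shows "(block (bsrc B n e), block (tv u)) \<in> HE\<^sup>*" "(block (bv u), block (bsrc B n e)) \<in> HE\<^sup>*"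
proof -
  have n1: "1 \<le> n" and n2: "2 \<le> n" using n by auto
  obtain a where a: "a \<in> redges B n u" "maxedge B \<omega> n a" using maxedge_exists[OF n1 u] by blast
  have "(e, a) \<in> \<omega> n" using a e unfolding maxedge_def redges_def by auto
  then show "(block (bsrc B n e), block (tv u)) \<in> HE\<^sup>*"
    using ordered_sources_reach[OF n u e a(1)] source_of_maxedge[OF n2 u a] by simp
  obtain b where b: "b \<in> redges B n u" "minedge B \<omega> n b" using minedge_exists[OF n1 u] by blast
  have "(b, e) \<in> \<omega> n" using b e unfolding minedge_def redges_def by auto
  then show "(block (bv u), block (bsrc B n e)) \<in> HE\<^sup>*"
    using ordered_sources_reach[OF n u b(1) e] source_of_minedge[OF n2 u b] by simp
qed

lemma fpath_shorten:
  assumes "fpath B m (Suc n) u p" "m < n"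
  shows "fpath B m n (bsrc B (Suc n) (p (Suc n))) p"
  using assms unfolding fpath_def by auto

lemma fpath_last_edge: "fpath B m n u p \<Longrightarrow> p n \<in> redges B n u"
  unfolding fpath_def redges_def by auto

lemma path_source_reaches:
  assumes m: "2 \<le> m" and path: "fpath B m n u p"
  shows "(block (fsrc B m p), block (tv u)) \<in> HE\<^sup>* \<and> (block (bv u), block (fsrc B m p)) \<in> HE\<^sup>*"
  using path
proof (induction n arbitrary: u)
  case 0
  then show ?case unfolding fpath_def by simp
next
  case (Suc n)
  have u: "u \<in> VV" and e: "p (Suc n) \<in> redges B (Suc n) u"
    using fpath_last_edge[OF Suc.prems] range_in_VV[of "Suc n"] unfolding redges_def by auto
  have level: "3 \<le> Suc n" using Suc.prems m unfolding fpath_def by auto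
  note step = source_reaches[OF level u e]
  show ?case
  proof (cases "n = m")
    case True
    then show ?thesis using step unfolding fsrc_def by simp
  next
    case False
    then have "m < n" using Suc.prems unfolding fpath_def by auto
    define u' where "u' = bsrc B (Suc n) (p (Suc n))"
    have u': "u' \<in> VV" using source_in_VV[of "Suc n"] level e unfolding u'_def redges_def by auto
    have IH: "(block (fsrc B m p), block (tv u')) \<in> HE\<^sup>*" "(block (bv u'), block (fsrc B m p)) \<in> HE\<^sup>*"
      using Suc.IH fpath_shorten[OF Suc.prems \<open>m < n\<close>] unfolding u'_def by auto
    have "(block (tv u'), block (tv u)) \<in> HE\<^sup>*"
      using reach_from_top[OF step(1)[folded u'_def] tv_in_Vtil[OF u] u'] .
    moreover have "(block (bv u), block (bv u')) \<in> HE\<^sup>*"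
      using reach_to_bottom[OF step(2)[folded u'_def] bv_in_Vbar[OF u] u'] .
    ultimately show ?thesis using IH rtrancl_trans by metis
  qed
qed

lemma VV_nonempty: "VV \<noteq> {}"
  using bratteli level_vertices[of 1] unfolding bratteli_def by auto

text \<open>For t in Vtil and b in Vbar the blocks are [bv t, t] and [b, tv b]; \<sigma> t = b joins them.\<close>
lemma sigma_edge:
  assumes "t \<in> Vtil B \<omega>" "b \<in> Vbar B \<omega>" "\<sigma> t = b"
  shows "(block t, block b) \<in> HE"
  using HE_block_edge[of t b] Vtil_fixed[OF assms(1)] Vbar_fixed[OF assms(2)] assms(3) by simp

text \<open>Part (1): for B simple, choose M such that every vertex of level 3 is connected to
  every vertex of level M, and consecutive edges e, e' into a vertex of level M + 1.
  Every block reaches block (tv (s e)), which has an edge to block (bv (s e')),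
  which reaches every block.\<close>
lemma strongly_connected_if_simple:
  assumes "simple B"
  shows "strongly_connected HV HE"
proof -
  obtain M where M: "3 < M"
    and conn: "\<forall>v\<in>bV B 3. \<forall>w\<in>bV B M. \<exists>p. fpath B 3 M w p \<and> fsrc B 3 p = v"
    using assms unfolding simple_def by blast
  have conn': "\<exists>p. fpath B 3 M w p \<and> fsrc B 3 p = v" if "v \<in> VV" "w \<in> VV" for v w
    using conn that level_vertices[of 3] level_vertices[of M] M by simp
  obtain u where u: "u \<in> VV" using VV_nonempty by blast
  define m where "m = M - 1"
  have Mm: "Suc M = Suc (Suc m)" and m: "1 \<le> m" using M unfolding m_def by auto
  obtain e e' where e: "nextedge B \<omega> (Suc M) e e'" "brng B (Suc M) e = u"
    using nextedge_exists[of "Suc M" u] u by auto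
  define u1 where "u1 = bsrc B (Suc M) e"
  define u2 where "u2 = bsrc B (Suc M) e'"
  have u12: "u1 \<in> VV" "u2 \<in> VV"
    using e source_in_VV[of "Suc M"] M unfolding nextedge_def u1_def u2_def by auto
  have "\<sigma> (tv u1) = bv u2"
    using sigma_across_nextedge[OF m u, of e e'] e unfolding Mm u1_def u2_def by simp
  then have middle: "(block (tv u1), block (bv u2)) \<in> HE"
    using sigma_edge tv_in_Vtil[OF u12(1)] bv_in_Vbar[OF u12(2)] by blast
  show ?thesis
    unfolding strongly_connected_def HV_eq
  proof (intro ballI)
    fix z z' assume "z \<in> block ` VV" "z' \<in> block ` VV"
    then obtain w w' where w: "w \<in> VV" "z = block w" "w' \<in> VV" "z' = block w'" by blast
    obtain p where p: "fpath B 3 M u1 p" "fsrc B 3 p = w" using conn' w(1) u12(1) by blast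
    obtain p' where p': "fpath B 3 M u2 p'" "fsrc B 3 p' = w'" using conn' w(3) u12(2) by blast
    have "(block w, block (tv u1)) \<in> HE\<^sup>*" using path_source_reaches[of 3, OF _ p(1)] p(2) by simp
    moreover have "(block (bv u2), block w') \<in> HE\<^sup>*"
      using path_source_reaches[of 3, OF _ p'(1)] p'(2) by simp
    ultimately show "(z, z') \<in> HE\<^sup>*" using middle w by (meson rtrancl_into_rtrancl rtrancl_trans)
  qed
qed

text \<open>Part (2): for B in class A, a vertex v of the last block at level 3 receives edges
  from every vertex of level 2; any two of these edges are comparable in r^{-1}(v), so
  any two blocks are comparable for reachability.\<close>
lemma weakly_connected_if_classA:
  assumes "classA B"
  shows "weakly_connected HV HE"
proof -
  obtain k c d lab where c: "1 \<le> c" and A: "\<forall>n\<ge>1.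
        (\<forall>v\<in>bV B n. lab n v \<in> {1..Suc k}) \<and>
        (\<forall>i\<in>{1..k}. card {v\<in>bV B n. lab n v = i} = d i) \<and>
        card {v\<in>bV B n. lab n v = Suc k} = c \<and>
        (\<forall>w\<in>bV B n. \<forall>v\<in>bV B (Suc n).
           (lab (Suc n) v = Suc k \<longrightarrow> nedges B n w v > 0) \<and>
           (lab (Suc n) v \<noteq> Suc k \<longrightarrow> (nedges B n w v > 0 \<longleftrightarrow> lab n w = lab (Suc n) v)))"
    using assms unfolding classA_def by blast
  have "card {v\<in>bV B 3. lab 3 v = Suc k} = c" using A[rule_format, of 3] by simp
  then have "{v\<in>bV B 3. lab 3 v = Suc k} \<noteq> {}" using c by (metis card.empty not_one_le_zero)
  then obtain v where v: "v \<in> VV" "lab 3 v = Suc k" using level_vertices[of 3] by auto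
  have full: "\<exists>e\<in>redges B 3 v. bsrc B 3 e = w" if w: "w \<in> VV" for w
  proof -
    have "nedges B 2 w v > 0"
      using A[rule_format, of 2] v w level_vertices[of 2] level_vertices[of 3] by (simp add: numeral_3_eq_3)
    then have "{e \<in> bE B (Suc 2). bsrc B (Suc 2) e = w \<and> brng B (Suc 2) e = v} \<noteq> {}"
      unfolding nedges_def by (metis card.empty less_irrefl)
    then show ?thesis unfolding redges_def numeral_3_eq_3 numeral_2_eq_2 by blast
  qed
  show ?thesis
    unfolding weakly_connected_def HV_eq
  proof (intro ballI)
    fix z z' assume "z \<in> block ` VV" "z' \<in> block ` VV"
    then obtain w w' where w: "w \<in> VV" "z = block w" "w' \<in> VV" "z' = block w'" by blast
    obtain e e' where e: "e \<in> redges B 3 v" "bsrc B 3 e = w" "e' \<in> redges B 3 v" "bsrc B 3 e' = w'"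
      using full w(1,3) by blast
    have "e = e' \<or> (e, e') \<in> \<omega> 3 \<or> (e', e) \<in> \<omega> 3"
      using linear_order_onD(5)[OF redges_linear_order[of 3 v]] v(1) e(1,3) by auto
    then show "(z, z') \<in> HE\<^sup>* \<or> (z', z) \<in> HE\<^sup>*"
      using ordered_sources_reach[of 3 v] v(1) e w by auto
  qed
qed

end

theorem mainTheorem8:
  fixes B :: "('v, 'e) bdiag"
    and \<omega> :: "nat \<Rightarrow> ('e \<times> 'e) set"
    and \<phi> :: "(nat \<Rightarrow> 'e) \<Rightarrow> (nat \<Rightarrow> 'e)"
    and VV :: "'v set"
    and tv bv \<sigma> :: "'v \<Rightarrow> 'v"
  assumes "bratteli B"
    and "aperiodic B"
    and "finite VV"
    and "bordering B \<omega>"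
    and "vershik_map B \<omega> \<phi>"
    and "assoc_sigma B \<omega> \<phi> \<sigma>"
    and "well_telescoped B \<omega> VV tv bv \<sigma>"
  shows "(simple B \<longrightarrow>
            strongly_connected (Hverts VV (Vtil B \<omega>) (Vbar B \<omega>) tv bv)
              (Hedges (Hverts VV (Vtil B \<omega>) (Vbar B \<omega>) tv bv) \<sigma>)) \<and>
         (classA B \<longrightarrow>
            weakly_connected (Hverts VV (Vtil B \<omega>) (Vbar B \<omega>) tv bv)
              (Hedges (Hverts VV (Vtil B \<omega>) (Vbar B \<omega>) tv bv) \<sigma>))"
proof -
  interpret well_telescoped_diagram B \<omega> VV tv bv \<sigma>
    using assms(1,4,7) by unfold_locales
  show ?thesis
    using strongly_connected_if_simple weakly_connected_if_classA unfolding HV_def HE_def by blast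
qed

end
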